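(* Let $F\subsetneq K$ be fields of characteristic $0$, with $F$ a proper nonempty subfield of $K$. Let $p\in K[x]$ be a nonzero polynomial and $r$ a positive integer. Then $D_F(p^{[r]})\geq D_F(p)$.
   Context: $p^{[r]}$ denotes the $r$-th iterate of $p$. For sets $F\subset K$ and $p(x)=\sum_{k=0}^{n}a_kx^k\in K[x]$ with $a_n\neq 0$, the $F$ deficit $D_F(p)$ is defined as follows: if $p\in K[x]\setminus F[x]$, then $D_F(p)=n-\max\{0\le k\le n: a_k\notin F\}$; if $p\in F[x]$, then $D_F(p)=n$. Here $F[x]$ denotes the set of polynomials with all coefficients in $F$. *)

theory Defs
  imports "HOL-Computational_Algebra.Polynomial"
begin

definition is_subfield :: "'k::field set \<Rightarrow> bool" where
  "is_subfield F \<longleftrightarrow> 0 \<in> F \<and> 1 \<in> F \<and>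
     (\<forall>a\<in>F. \<forall>b\<in>F. a + b \<in> F \<and> a * b \<in> F) \<and>
     (\<forall>a\<in>F. - a \<in> F) \<and> (\<forall>a\<in>F. a \<noteq> 0 \<longrightarrow> inverse a \<in> F)"

definition poly_iter :: "'a::comm_semiring_1 poly \<Rightarrow> nat \<Rightarrow> 'a poly" where
  "poly_iter p r = ((\<lambda>q. pcompose p q) ^^ r) [:0, 1:]"

definition deficit :: "'k::zero set \<Rightarrow> 'k poly \<Rightarrow> nat" where
  "deficit F p =
     (if \<forall>k \<le> degree p. coeff p k \<in> F then degree p
      else degree p - Max {k. k \<le> degree p \<and> coeff p k \<notin> F})"

end

theory Submission
  imports Defs
begin

text \<open>
  For \<open>d \<le> deg q\<close>, \<open>D\<^sub>F(q) \<ge> d\<close> says exactly that all coefficients of \<open>q\<close> of index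
  \<open>> deg q - d\<close> lie in \<open>F\<close>.
  This property survives products with a controlled loss (a coefficient of \<open>q q'\<close> far up
  only involves a low coefficient of one factor times a vanishing one of the other, or two
  high coefficients), so expanding \<open>p \<circ> q = \<Sum> c\<^sub>i q\<^sup>i\<close> yields
  \<open>D\<^sub>F(p \<circ> q) \<ge> min (D\<^sub>F p) (D\<^sub>F q)\<close>; the theorem follows by induction on \<open>r\<close>.
\<close>

lemma is_subfieldD:
  assumes "is_subfield F"
  shows "0 \<in> F" "a \<in> F \<Longrightarrow> b \<in> F \<Longrightarrow> a + b \<in> F" "a \<in> F \<Longrightarrow> b \<in> F \<Longrightarrow> a * b \<in> F"
  using assms by (auto simp: is_subfield_def)

lemma sum_in_subfield:
  assumes "is_subfield F" "\<And>i. i \<in> A \<Longrightarrow> f i \<in> F"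
  shows "sum f A \<in> F"
  using assms(2)
  by (induction A rule: infinite_finite_induct) (simp_all add: is_subfieldD[OF assms(1)])

definition high_coeffs_in :: "'k::field set \<Rightarrow> nat \<Rightarrow> 'k poly \<Rightarrow> bool" where
  "high_coeffs_in F e q \<longleftrightarrow> (\<forall>k>e. coeff q k \<in> F)"

lemma high_coeffs_in_mono: "high_coeffs_in F e q \<Longrightarrow> e \<le> e' \<Longrightarrow> high_coeffs_in F e' q"
  unfolding high_coeffs_in_def by auto

lemma high_coeffs_in_degree_le: "is_subfield F \<Longrightarrow> degree q \<le> e \<Longrightarrow> high_coeffs_in F e q"
  unfolding high_coeffs_in_def by (auto simp: coeff_eq_0 is_subfieldD)

lemma high_coeffs_in_smult:
  "is_subfield F \<Longrightarrow> c \<in> F \<Longrightarrow> high_coeffs_in F e q \<Longrightarrow> high_coeffs_in F e (smult c q)"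
  unfolding high_coeffs_in_def by (auto simp: is_subfieldD)

lemma high_coeffs_in_sum:
  assumes "is_subfield F" "\<And>i. i \<in> A \<Longrightarrow> high_coeffs_in F e (f i)"
  shows "high_coeffs_in F e (sum f A)"
  using assms unfolding high_coeffs_in_def coeff_sum by (auto intro!: sum_in_subfield)

lemma high_coeffs_in_mult:
  assumes F: "is_subfield F"
    and q: "high_coeffs_in F e q" "degree q \<le> a"
    and q': "high_coeffs_in F e' q'" "degree q' \<le> a'"
  shows "high_coeffs_in F (max (e + a') (a + e')) (q * q')"
  unfolding high_coeffs_in_def
proof (intro allI impI)
  fix k assume k: "max (e + a') (a + e') < k"
  have "coeff q i * coeff q' (k - i) \<in> F" if "i \<le> k" for i
  proof -
    consider "i \<le> e" | "k - i \<le> e'" | "e < i" "e' < k - i" by linarith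
    then show ?thesis
    proof cases
      case 1
      with k \<open>i \<le> k\<close> q'(2) have "degree q' < k - i" by linarith
      then have "coeff q' (k - i) = 0" by (rule coeff_eq_0)
      then show ?thesis by (simp add: is_subfieldD[OF F])
    next
      case 2
      with k \<open>i \<le> k\<close> q(2) have "degree q < i" by linarith
      then have "coeff q i = 0" by (rule coeff_eq_0)
      then show ?thesis by (simp add: is_subfieldD[OF F])
    next
      case 3
      with q(1) q'(1) show ?thesis by (simp add: high_coeffs_in_def is_subfieldD[OF F])
    qed
  qed
  then show "coeff (q * q') k \<in> F"
    unfolding coeff_mult by (auto intro: sum_in_subfield[OF F])
qed

lemma high_coeffs_in_power:
  assumes F: "is_subfield F" and q: "high_coeffs_in F e q" "degree q \<le> N" and "e \<le> N"
    and "1 \<le> k"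
  shows "high_coeffs_in F ((k - 1) * N + e) (q ^ k)"
  using \<open>1 \<le> k\<close>
proof (induction k rule: dec_induct)
  case base
  from q show ?case by simp
next
  case (step k)
  have "degree (q ^ k) \<le> k * N"
    by (metis q(2) degree_power_le mult.commute mult_le_mono2 order_trans)
  from high_coeffs_in_mult[OF F q step.IH this]
  have "high_coeffs_in F (max (e + k * N) (N + ((k - 1) * N + e))) (q * q ^ k)" .
  moreover have "max (e + k * N) (N + ((k - 1) * N + e)) = (Suc k - 1) * N + e"
    using step.hyps by (cases k) auto
  ultimately show ?case by simp
qed

lemma pcompose_monom: "pcompose (monom c i) q = smult c (q ^ i)"
  by (induction i) (simp_all add: monom_Suc pcompose_pCons monom_0)

lemma high_coeffs_in_pcompose:
  assumes F: "is_subfield F" and p: "high_coeffs_in F m p"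
    and q: "high_coeffs_in F e q" "degree q \<le> N" "e \<le> N"
  shows "high_coeffs_in F (max (m * N) ((degree p - 1) * N + e)) (pcompose p q)"
proof -
  let ?b = "max (m * N) ((degree p - 1) * N + e)"
  have "pcompose p q = (\<Sum>i\<le>degree p. smult (coeff p i) (q ^ i))"
    by (subst (1) poly_as_sum_of_monoms[symmetric]) (simp add: pcompose_sum pcompose_monom)
  moreover have "high_coeffs_in F ?b (smult (coeff p i) (q ^ i))" if i: "i \<le> degree p" for i
  proof (cases "coeff p i \<in> F")
    case True
    show ?thesis
    proof (cases "i = 0")
      case True
      with F show ?thesis by (intro high_coeffs_in_degree_le) auto
    next
      case False
      with high_coeffs_in_power[OF F q, of i]
      have "high_coeffs_in F ((i - 1) * N + e) (q ^ i)" by simp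
      moreover have "(i - 1) * N + e \<le> ?b"
        using i by (simp add: mult_le_mono1 diff_le_mono le_max_iff_disj)
      ultimately show ?thesis
        using high_coeffs_in_smult[OF F \<open>coeff p i \<in> F\<close>] high_coeffs_in_mono by blast
    qed
  next
    case False
    with p have "i \<le> m" by (auto simp: high_coeffs_in_def not_less[symmetric])
    have "degree (smult (coeff p i) (q ^ i)) \<le> i * N"
      by (metis degree_power_le degree_smult_le le_trans mult.commute mult_le_mono2 q(2))
    also have "\<dots> \<le> ?b" using \<open>i \<le> m\<close> by (simp add: mult_le_mono1 le_max_iff_disj)
    finally show ?thesis by (rule high_coeffs_in_degree_le[OF F])
  qed
  ultimately show ?thesis using high_coeffs_in_sum[OF F, of "{..degree p}"] by simp
qed

lemma deficit_le_degree: "deficit F p \<le> degree p"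
  by (simp add: deficit_def)

lemma deficit_eq_degree_minus_Max:
  "\<not> (\<forall>k \<le> degree p. coeff p k \<in> F) \<Longrightarrow>
     deficit F p = degree p - Max {k. k \<le> degree p \<and> coeff p k \<notin> F}"
  unfolding deficit_def by (rule if_not_P)

lemma high_coeffs_in_deficit:
  assumes F: "is_subfield F"
  shows "high_coeffs_in F (degree p - deficit F p) p"
proof (cases "\<forall>k \<le> degree p. coeff p k \<in> F")
  case True
  then show ?thesis
    unfolding high_coeffs_in_def by (metis coeff_eq_0 is_subfieldD(1)[OF F] not_le)
next
  case False
  define S where "S = {k. k \<le> degree p \<and> coeff p k \<notin> F}"
  have "finite S" "S \<noteq> {}" using False by (auto simp: S_def)
  then have "Max S \<le> degree p" by (auto simp: S_def)
  then have "degree p - deficit F p = Max S"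
    using deficit_eq_degree_minus_Max[OF False] by (simp add: S_def)
  moreover have "coeff p k \<in> F" if "Max S < k" for k
    using that Max_ge[OF \<open>finite S\<close>, of k] coeff_eq_0[of p k] is_subfieldD(1)[OF F]
    by (fastforce simp: S_def)
  ultimately show ?thesis by (simp add: high_coeffs_in_def)
qed

lemma le_deficit_iff:
  assumes F: "is_subfield F"
  shows "d \<le> deficit F p \<longleftrightarrow> d \<le> degree p \<and> high_coeffs_in F (degree p - d) p"
proof
  assume "d \<le> deficit F p"
  with deficit_le_degree[of F p] high_coeffs_in_deficit[OF F, of p]
  show "d \<le> degree p \<and> high_coeffs_in F (degree p - d) p"
    by (auto intro: high_coeffs_in_mono)
next
  assume d: "d \<le> degree p \<and> high_coeffs_in F (degree p - d) p"
  show "d \<le> deficit F p"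
  proof (cases "\<forall>k \<le> degree p. coeff p k \<in> F")
    case True
    with d show ?thesis by (simp add: deficit_def)
  next
    case False
    define S where "S = {k. k \<le> degree p \<and> coeff p k \<notin> F}"
    have "finite S" "S \<noteq> {}" using False by (auto simp: S_def)
    then have "Max S \<in> S" by simp
    with d have "Max S \<le> degree p - d"
      by (metis S_def mem_Collect_eq high_coeffs_in_def not_le)
    moreover have "deficit F p = degree p - Max S"
      unfolding S_def by (rule deficit_eq_degree_minus_Max[OF False])
    ultimately show ?thesis using d by linarith
  qed
qed

lemma deficit_pcompose:
  assumes F: "is_subfield F"
  shows "min (deficit F p) (deficit F q) \<le> deficit F (pcompose p q)"
proof (cases "min (deficit F p) (deficit F q) = 0")
  case False
  define d where "d = min (deficit F p) (deficit F q)"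
  define n where "n = degree p"
  define N where "N = degree q"
  have "d \<le> n" "d \<le> N"
    unfolding d_def n_def N_def by (simp_all add: min.coboundedI1 min.coboundedI2 deficit_le_degree)
  with False have "1 \<le> n" "1 \<le> N" by (auto simp: d_def)
  have "d \<le> deficit F p" "d \<le> deficit F q" by (simp_all add: d_def)
  then have p: "high_coeffs_in F (n - d) p" and q: "high_coeffs_in F (N - d) q"
    by (simp_all add: le_deficit_iff[OF F] n_def N_def)
  from high_coeffs_in_pcompose[OF F p q] \<open>d \<le> N\<close>
  have "high_coeffs_in F (max ((n - d) * N) ((n - 1) * N + (N - d))) (pcompose p q)"
    by (simp add: n_def N_def)
  moreover have "max ((n - d) * N) ((n - 1) * N + (N - d)) \<le> n * N - d"
  proof -
    have "d * N \<le> n * N" "N \<le> n * N" "d \<le> d * N"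
      using \<open>d \<le> n\<close> \<open>1 \<le> n\<close> \<open>1 \<le> N\<close> by simp_all
    moreover have "(n - d) * N = n * N - d * N" "(n - 1) * N = n * N - N"
      by (simp_all add: diff_mult_distrib)
    ultimately show ?thesis using \<open>d \<le> N\<close> by linarith
  qed
  ultimately have "high_coeffs_in F (n * N - d) (pcompose p q)"
    by (rule high_coeffs_in_mono)
  moreover have "d \<le> n * N"
    using \<open>d \<le> n\<close> \<open>1 \<le> N\<close> by (metis le_trans mult_le_mono2 mult_1_right)
  ultimately show ?thesis
    unfolding d_def[symmetric] le_deficit_iff[OF F] by (simp add: degree_pcompose n_def N_def)
qed simp

lemma poly_iter_Suc: "poly_iter p (Suc r) = pcompose p (poly_iter p r)"
  by (simp add: poly_iter_def)

theorem theorem21: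
  fixes F :: "'k::field_char_0 set" and p :: "'k poly" and r :: nat
  assumes "is_subfield F" and "F \<noteq> UNIV"
    and "p \<noteq> 0" and "r \<ge> 1"
  shows "deficit F (poly_iter p r) \<ge> deficit F p"
  using \<open>r \<ge> 1\<close>
proof (induction r rule: dec_induct)
  case base
  show ?case by (simp add: poly_iter_def)
next
  case (step r)
  with deficit_pcompose[OF \<open>is_subfield F\<close>, of p "poly_iter p r"]
  show ?case by (simp add: poly_iter_Suc)
qed

end
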